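(* $R(B_2,B_9) \ge 22$; that is, there exists a graph on $21$ vertices containing no copy of $B_2$ whose complement contains no copy of $B_9$.
   Context: For graphs $G,H$, the Ramsey number $R(G,H)$ is the smallest integer $N$ such that every red/blue coloring of the edges of $K_N$ contains a red copy of $G$ (as a subgraph, not necessarily induced) or a blue copy of $H$. The book $B_k$ is the graph on $k+2$ vertices consisting of an edge $uv$ together with $k$ further vertices, each adjacent exactly to $u$ and $v$. *)

theory Defs
  imports Main
begin

definition simple_graph :: "('a \<Rightarrow> 'a \<Rightarrow> bool) \<Rightarrow> bool" where
  "simple_graph E \<longleftrightarrow> (\<forall>x y. E x y = E y x) \<and> (\<forall>x. \<not> E x x)"

definition contains_book :: "'a set \<Rightarrow> ('a \<Rightarrow> 'a \<Rightarrow> bool) \<Rightarrow> nat \<Rightarrow> bool" where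
  "contains_book V E k \<longleftrightarrow>
     (\<exists>u v W. u \<in> V \<and> v \<in> V \<and> u \<noteq> v \<and> E u v \<and>
        W \<subseteq> V - {u, v} \<and> finite W \<and> card W = k \<and> (\<forall>w\<in>W. E u w \<and> E v w))"

definition graph_complement :: "('a \<Rightarrow> 'a \<Rightarrow> bool) \<Rightarrow> 'a \<Rightarrow> 'a \<Rightarrow> bool" where
  "graph_complement E x y \<longleftrightarrow> x \<noteq> y \<and> \<not> E x y"

end

theory Submission
  imports Defs
begin

text \<open>The lower bound is witnessed by a graph on 21 vertices found by computer search,
  given by adjacency lists, together with the adjacency lists of its complement. A
  graph contains no book B_k as soon as every edge uv has fewer than k common
  neighbours; for the witness and its complement this is a finite check done by
  evaluation over the lists.\<close>

lemma not_contains_book_if_codegree_less: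
  assumes adjacency: "\<And>u v. u \<in> set xs \<Longrightarrow> v \<in> set xs \<Longrightarrow> E u v \<longleftrightarrow> v \<in> set (N u)"
    and codegree: "\<forall>u\<in>set xs. \<forall>v\<in>set (N u). length (filter (\<lambda>w. w \<in> set (N v)) (N u)) < k"
  shows "\<not> contains_book (set xs) E k"
proof
  assume "contains_book (set xs) E k"
  then obtain u v W where uv: "u \<in> set xs" "v \<in> set xs" "E u v"
    and W: "W \<subseteq> set xs - {u, v}" "card W = k" "\<forall>w\<in>W. E u w \<and> E v w"
    unfolding contains_book_def by blast
  let ?common = "filter (\<lambda>w. w \<in> set (N v)) (N u)"
  have "W \<subseteq> set ?common"
    using W(1,3) adjacency uv(1,2) by auto
  then have "k \<le> card (set ?common)"
    using W(2) card_mono[OF finite_set] by blast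
  also have "\<dots> \<le> length ?common"
    by (rule card_length)
  finally show False
    using codegree uv adjacency by fastforce
qed

definition witness_neighbours :: "nat list list" where
  "witness_neighbours = [[1, 6, 7, 9, 13, 14, 15, 20], [0, 2, 3, 10, 12, 15, 16, 19], [1, 5, 6, 12, 13, 17, 18, 20],
    [1, 5, 6, 8, 9, 14, 16, 18], [5, 6, 9, 10, 12, 15, 16, 20], [2, 3, 4, 7, 13, 14, 15, 19],
    [0, 2, 3, 4, 7, 10, 11, 17], [0, 5, 6, 8, 12, 16, 18, 19], [3, 7, 10, 12, 13, 15, 17, 20],
    [0, 3, 4, 12, 13, 17, 18, 19], [1, 4, 6, 8, 13, 14, 19], [6, 12, 13, 14, 15, 16, 18, 19],
    [1, 2, 4, 7, 8, 9, 11, 14], [0, 2, 5, 8, 9, 10, 11, 16], [0, 3, 5, 10, 11, 12, 20],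
    [0, 1, 4, 5, 8, 11, 17, 18], [1, 3, 4, 7, 11, 13, 17, 20], [2, 6, 8, 9, 15, 16, 19],
    [2, 3, 7, 9, 11, 15, 20], [1, 5, 7, 9, 10, 11, 17, 20], [0, 2, 4, 8, 14, 16, 18, 19]]"

definition witness_non_neighbours :: "nat list list" where
  "witness_non_neighbours = [[2, 3, 4, 5, 8, 10, 11, 12, 16, 17, 18, 19], [4, 5, 6, 7, 8, 9, 11, 13, 14, 17, 18, 20], [0, 3, 4, 7, 8, 9, 10, 11, 14, 15, 16, 19],
    [0, 2, 4, 7, 10, 11, 12, 13, 15, 17, 19, 20], [0, 1, 2, 3, 7, 8, 11, 13, 14, 17, 18, 19], [0, 1, 6, 8, 9, 10, 11, 12, 16, 17, 18, 20],
    [1, 5, 8, 9, 12, 13, 14, 15, 16, 18, 19, 20], [1, 2, 3, 4, 9, 10, 11, 13, 14, 15, 17, 20], [0, 1, 2, 4, 5, 6, 9, 11, 14, 16, 18, 19],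
    [1, 2, 5, 6, 7, 8, 10, 11, 14, 15, 16, 20], [0, 2, 3, 5, 7, 9, 11, 12, 15, 16, 17, 18, 20], [0, 1, 2, 3, 4, 5, 7, 8, 9, 10, 17, 20],
    [0, 3, 5, 6, 10, 13, 15, 16, 17, 18, 19, 20], [1, 3, 4, 6, 7, 12, 14, 15, 17, 18, 19, 20], [1, 2, 4, 6, 7, 8, 9, 13, 15, 16, 17, 18, 19],
    [2, 3, 6, 7, 9, 10, 12, 13, 14, 16, 19, 20], [0, 2, 5, 6, 8, 9, 10, 12, 14, 15, 18, 19], [0, 1, 3, 4, 5, 7, 10, 11, 12, 13, 14, 18, 20],
    [0, 1, 4, 5, 6, 8, 10, 12, 13, 14, 16, 17, 19], [0, 2, 3, 4, 6, 8, 12, 13, 14, 15, 16, 18], [1, 3, 5, 6, 7, 9, 10, 11, 12, 13, 15, 17]]"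

definition witness_graph :: "nat \<Rightarrow> nat \<Rightarrow> bool" where
  "witness_graph x y \<longleftrightarrow> x < 21 \<and> y < 21 \<and> y \<in> set (witness_neighbours ! x)"

lemma simple_graph_witness_graph: "simple_graph witness_graph"
proof -
  have "\<forall>x\<in>set [0..<21]. \<forall>y\<in>set [0..<21]. witness_graph x y = witness_graph y x"
    "\<forall>x\<in>set [0..<21]. \<not> witness_graph x x"
    unfolding witness_graph_def witness_neighbours_def by code_simp+
  then show ?thesis
    unfolding simple_graph_def by (auto simp: witness_graph_def)
qed

lemma witness_graph_B2_free: "\<not> contains_book {0..<21} witness_graph 2"
proof -
  have "\<not> contains_book (set [0..<21]) witness_graph 2"
  proof (rule not_contains_book_if_codegree_less)
    show "\<forall>u\<in>set [0..<21]. \<forall>v\<in>set (witness_neighbours ! u).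
        length (filter (\<lambda>w. w \<in> set (witness_neighbours ! v)) (witness_neighbours ! u)) < 2"
      unfolding witness_neighbours_def by code_simp
  qed (simp add: witness_graph_def)
  then show ?thesis by simp
qed

lemma witness_non_neighbours_correct:
  "\<forall>u\<in>set [0..<21]. \<forall>w\<in>set [0..<21].
     w \<in> set (witness_non_neighbours ! u) \<longleftrightarrow> w \<noteq> u \<and> w \<notin> set (witness_neighbours ! u)"
  unfolding witness_neighbours_def witness_non_neighbours_def by code_simp

lemma witness_complement_B9_free:
  "\<not> contains_book {0..<21} (graph_complement witness_graph) 9"
proof -
  have "\<not> contains_book (set [0..<21]) (graph_complement witness_graph) 9"
  proof (rule not_contains_book_if_codegree_less)
    show "\<forall>u\<in>set [0..<21]. \<forall>v\<in>set (witness_non_neighbours ! u).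
        length (filter (\<lambda>w. w \<in> set (witness_non_neighbours ! v)) (witness_non_neighbours ! u)) < 9"
      unfolding witness_non_neighbours_def by code_simp
    show "graph_complement witness_graph u v \<longleftrightarrow> v \<in> set (witness_non_neighbours ! u)"
      if "u \<in> set [0..<21]" "v \<in> set [0..<21]" for u v
      using witness_non_neighbours_correct that
      by (auto simp: graph_complement_def witness_graph_def)
  qed
  then show ?thesis by simp
qed

theorem mainTheorem5:
  shows "\<exists>E :: nat \<Rightarrow> nat \<Rightarrow> bool. simple_graph E \<and>
           \<not> contains_book {0..<21} E 2 \<and>
           \<not> contains_book {0..<21} (graph_complement E) 9"
  using simple_graph_witness_graph witness_graph_B2_free witness_complement_B9_free
  by blast

end
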